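(* Suppose that $\theta(n)=O(n^{\alpha})$ for some $\alpha\in(0,1]$. Then $\theta'(m)=O(m^{\beta})$, where $\beta=\frac{\alpha}{1+\alpha}$.
   Context: An interval colouring of a graph $G$ is a proper edge-colouring $c\colon E(G)\to\mathbb{N}$ such that for every vertex $v$ the set of colours on edges incident to $v$ is a set of consecutive integers. The interval colouring thickness $\theta(G)$ is the minimum number of interval colourable subgraphs into which $E(G)$ can be edge-decomposed. $\theta(n)$ is the maximum of $\theta(G)$ over graphs $G$ on $n$ vertices and $\theta'(m)$ the maximum of $\theta(G)$ over graphs with $m$ edges. *)

theory Defs
  imports Main "HOL-Library.Landau_Symbols"
begin

text \<open>A finite simple graph is given by its edge set: a finite set of 2-element
  subsets of the vertex type nat. Isolated vertices are irrelevant for colourings.\<close>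

definition simple_edges :: "nat set set \<Rightarrow> bool" where
  "simple_edges E \<longleftrightarrow> finite E \<and> (\<forall>e\<in>E. card e = 2)"

definition interval_colouring :: "nat set set \<Rightarrow> (nat set \<Rightarrow> nat) \<Rightarrow> bool" where
  "interval_colouring F c \<longleftrightarrow>
     (\<forall>e\<in>F. \<forall>f\<in>F. e \<noteq> f \<and> e \<inter> f \<noteq> {} \<longrightarrow> c e \<noteq> c f) \<and>
     (\<forall>v a b x. a \<in> c ` {e\<in>F. v \<in> e} \<and> b \<in> c ` {e\<in>F. v \<in> e} \<and> a \<le> x \<and> x \<le> b
        \<longrightarrow> x \<in> c ` {e\<in>F. v \<in> e})"

definition interval_colourable :: "nat set set \<Rightarrow> bool" where
  "interval_colourable F \<longleftrightarrow> (\<exists>c. interval_colouring F c)"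

definition ic_thickness :: "nat set set \<Rightarrow> nat" where
  "ic_thickness E = (LEAST k. \<exists>p. (\<forall>e\<in>E. p e < k) \<and>
       (\<forall>i<k. interval_colourable {e\<in>E. p e = i}))"

definition theta_n :: "nat \<Rightarrow> nat" where
  "theta_n n = Max {ic_thickness E | E. simple_edges E \<and> (\<forall>e\<in>E. e \<subseteq> {0..<n})}"

definition theta_m :: "nat \<Rightarrow> nat" where
  "theta_m m = Max {ic_thickness E | E. simple_edges E \<and> card E = m}"

end

theory Submission
  imports Defs
begin

(* Split the edges of a graph with m edges at the degree threshold d = \<lceil>m^\<beta>\<rceil>. At most 2m/d
   vertices have degree \<ge> d, so the edges between them form a graph on at most 2m/d vertices,
   of thickness at most \<theta>(2m/d) = O((m/d)^\<alpha>). Every other edge has an endpoint of degree < d;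
   fixing such an end for each edge, an edge conflicts with fewer than 2d others, so a greedy
   colouring with 2d colours makes every colour class a star forest, which is interval colourable.
   The choice of d balances (m/d)^\<alpha> against d. *)

definition ic_decomposition :: "nat set set \<Rightarrow> nat \<Rightarrow> (nat set \<Rightarrow> nat) \<Rightarrow> bool" where
  "ic_decomposition E k p \<longleftrightarrow>
     (\<forall>e\<in>E. p e < k) \<and> (\<forall>i<k. interval_colourable {e\<in>E. p e = i})"

lemma ic_thickness_le: "ic_decomposition E k p \<Longrightarrow> ic_thickness E \<le> k"
  unfolding ic_thickness_def ic_decomposition_def by (rule Least_le) blast

lemma interval_colourable_subsingleton:
  "(\<And>e f. e \<in> F \<Longrightarrow> f \<in> F \<Longrightarrow> e = f) \<Longrightarrow> interval_colourable F"
  unfolding interval_colourable_def interval_colouring_def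
  by (rule exI[of _ "\<lambda>_. 0"]) auto

lemma ic_decomposition_card:
  assumes "finite E" shows "\<exists>p. ic_decomposition E (card E) p"
proof -
  obtain p where p: "bij_betw p E {0..<card E}"
    using ex_bij_betw_finite_nat[OF assms] by blast
  then have "ic_decomposition E (card E) p"
    unfolding ic_decomposition_def
    by (auto intro!: interval_colourable_subsingleton simp: bij_betw_def inj_on_def)
  then show ?thesis by blast
qed

lemma ic_thickness_le_card: "finite E \<Longrightarrow> ic_thickness E \<le> card E"
  using ic_decomposition_card ic_thickness_le by blast

lemma ic_decomposition_ic_thickness:
  assumes "finite E" shows "\<exists>p. ic_decomposition E (ic_thickness E) p"
  unfolding ic_thickness_def ic_decomposition_def[symmetric]
  by (rule LeastI_ex) (use ic_decomposition_card[OF assms] in blast)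

lemma ic_thickness_Un_le:
  assumes "finite A" "finite B" "A \<inter> B = {}"
  shows "ic_thickness (A \<union> B) \<le> ic_thickness A + ic_thickness B"
proof -
  obtain pA where pA: "ic_decomposition A (ic_thickness A) pA"
    using ic_decomposition_ic_thickness[OF assms(1)] by blast
  obtain pB where pB: "ic_decomposition B (ic_thickness B) pB"
    using ic_decomposition_ic_thickness[OF assms(2)] by blast
  define k where "k = ic_thickness A"
  define p where "p e = (if e \<in> A then pA e else k + pB e)" for e
  have "ic_decomposition (A \<union> B) (k + ic_thickness B) p"
    unfolding ic_decomposition_def
  proof (intro conjI ballI allI impI)
    fix e assume "e \<in> A \<union> B"
    then show "p e < k + ic_thickness B"
      using pA pB by (auto simp: p_def k_def ic_decomposition_def)
  next
    fix i assume i: "i < k + ic_thickness B"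
    show "interval_colourable {e \<in> A \<union> B. p e = i}"
    proof (cases "i < k")
      case True
      then have "{e \<in> A \<union> B. p e = i} = {e\<in>A. pA e = i}"
        using assms(3) by (auto simp: p_def)
      then show ?thesis using pA True by (simp add: ic_decomposition_def k_def)
    next
      case False
      then have "{e \<in> A \<union> B. p e = i} = {e\<in>B. pB e = i - k}"
        using assms(3) pA by (auto simp: p_def k_def ic_decomposition_def)
      then show ?thesis using pB False i by (simp add: ic_decomposition_def)
    qed
  qed
  then show ?thesis unfolding k_def by (rule ic_thickness_le)
qed

lemma interval_colouringI:
  assumes "\<And>v. inj_on c {e\<in>F. v \<in> e}" and "\<And>v. \<exists>a b. c ` {e\<in>F. v \<in> e} = {a..<b}"
  shows "interval_colouring F c"
  unfolding interval_colouring_def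
proof (intro conjI allI ballI impI)
  fix e f assume "e \<in> F" "f \<in> F" "e \<noteq> f \<and> e \<inter> f \<noteq> {}"
  then obtain v where "e \<in> {e\<in>F. v \<in> e}" "f \<in> {e\<in>F. v \<in> e}" "e \<noteq> f" by blast
  then show "c e \<noteq> c f" using assms(1)[of v] by (auto dest: inj_onD)
next
  fix v a b x
  assume "a \<in> c ` {e\<in>F. v \<in> e} \<and> b \<in> c ` {e\<in>F. v \<in> e} \<and> a \<le> x \<and> x \<le> b"
  moreover obtain a' b' where "c ` {e\<in>F. v \<in> e} = {a'..<b'}" using assms(2) by blast
  ultimately show "x \<in> c ` {e\<in>F. v \<in> e}" by auto
qed

lemma interval_colourable_pendant_ends:
  assumes fin: "finite F" and two: "\<And>e. e \<in> F \<Longrightarrow> card e = 2"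
    and end_in: "\<And>e. e \<in> F \<Longrightarrow> l e \<in> e"
    and pendant: "\<And>e f. e \<in> F \<Longrightarrow> f \<in> F \<Longrightarrow> e \<noteq> f \<Longrightarrow> l e \<notin> f"
  shows "interval_colourable F"
proof -
  define h where "h e = the_elem (e - {l e})" for e :: "nat set"
  have edge_eq: "(\<forall>x. x \<in> e \<longleftrightarrow> x = l e \<or> x = h e) \<and> h e \<noteq> l e" if "e \<in> F" for e
  proof -
    have "card (e - {l e}) = 1"
      using two[OF that] end_in[OF that] by (simp add: card_Diff_singleton)
    then obtain x where x: "e - {l e} = {x}" by (rule card_1_singletonE)
    then have "h e = x" by (simp add: h_def)
    moreover have "y \<in> e \<longleftrightarrow> y = l e \<or> y = x" for y
      using x end_in[OF that] by blast
    ultimately show ?thesis using x by blast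
  qed
  define S where "S v = {e\<in>F. h e = v}" for v
  have "\<forall>v. \<exists>g. bij_betw g (S v) {0..<card (S v)}"
    using fin by (intro allI ex_bij_betw_finite_nat) (simp add: S_def)
  then obtain g where g: "\<forall>v. bij_betw (g v) (S v) {0..<card (S v)}"
    by (rule choice[THEN exE])
  (* Every vertex is the pendant end of a single edge or the centre of a star, whose edges
     receive the colours 0, 1, ... *)
  define c where "c e = g (h e) e" for e
  have "interval_colouring F c"
  proof (rule interval_colouringI)
    fix v
    have "inj_on c {e\<in>F. v \<in> e} \<and> (\<exists>a b. c ` {e\<in>F. v \<in> e} = {a..<b})"
    proof (cases "\<exists>e\<in>F. l e = v")
      case True
      then obtain e where "e \<in> F" "l e = v" by blast
      then have "{e\<in>F. v \<in> e} = {e}" using pendant end_in by blast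
      then have "inj_on c {e\<in>F. v \<in> e}" "c ` {e\<in>F. v \<in> e} = {c e..<Suc (c e)}" by simp_all
      then show ?thesis by blast
    next
      case False
      have "v \<in> e \<longleftrightarrow> h e = v" if "e \<in> F" for e
        using edge_eq[OF that] False that by auto
      then have incident: "{e\<in>F. v \<in> e} = S v" by (auto simp: S_def)
      have "inj_on c (S v) = inj_on (g v) (S v)" by (rule inj_on_cong) (simp add: c_def S_def)
      moreover have "c ` S v = g v ` S v" by (auto simp: c_def S_def)
      ultimately have "inj_on c (S v)" "c ` S v = {0..<card (S v)}"
        using g[rule_format, of v] by (simp_all add: bij_betw_def)
      then show ?thesis unfolding incident by blast
    qed
    then show "inj_on c {e\<in>F. v \<in> e}" "\<exists>a b. c ` {e\<in>F. v \<in> e} = {a..<b}" by blast+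
  qed
  then show ?thesis unfolding interval_colourable_def by blast
qed

lemma interval_colourable_image:
  assumes inj: "inj_on f (\<Union>F)" and colourable: "interval_colourable ((`) f ` F)"
  shows "interval_colourable F"
proof -
  obtain c' where c': "interval_colouring ((`) f ` F) c'"
    using colourable unfolding interval_colourable_def by blast
  note proper = c'[unfolded interval_colouring_def, THEN conjunct1, rule_format]
  note interval = c'[unfolded interval_colouring_def, THEN conjunct2, rule_format]
  have image_eq: "f ` e1 = f ` e2 \<longleftrightarrow> e1 = e2" if "e1 \<in> F" "e2 \<in> F" for e1 e2
    using inj_on_image_eq_iff[OF inj] that by blast
  have incident: "c' ` {e'\<in>(`) f ` F. f v \<in> e'} = (\<lambda>e. c' (f ` e)) ` {e\<in>F. v \<in> e}"
    if "v \<in> \<Union>F" for v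
  proof -
    have "f v \<in> f ` e \<longleftrightarrow> v \<in> e" if "e \<in> F" for e
      using inj_on_image_mem_iff[OF inj \<open>v \<in> \<Union>F\<close>] that by blast
    then have "{e'\<in>(`) f ` F. f v \<in> e'} = (`) f ` {e\<in>F. v \<in> e}" by auto
    then show ?thesis by (simp add: image_image)
  qed
  have "interval_colouring F (\<lambda>e. c' (f ` e))"
    unfolding interval_colouring_def
  proof (intro conjI allI ballI impI)
    fix e1 e2 assume "e1 \<in> F" "e2 \<in> F" "e1 \<noteq> e2 \<and> e1 \<inter> e2 \<noteq> {}"
    then show "c' (f ` e1) \<noteq> c' (f ` e2)"
      using proper[of "f ` e1" "f ` e2"] image_eq by blast
  next
    fix v a b x
    assume H: "a \<in> (\<lambda>e. c' (f ` e)) ` {e\<in>F. v \<in> e} \<and> b \<in> (\<lambda>e. c' (f ` e)) ` {e\<in>F. v \<in> e}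
      \<and> a \<le> x \<and> x \<le> b"
    then have "v \<in> \<Union>F" by auto
    from H show "x \<in> (\<lambda>e. c' (f ` e)) ` {e\<in>F. v \<in> e}"
      using interval[of a "f v" b x] unfolding incident[OF \<open>v \<in> \<Union>F\<close>] by blast
  qed
  then show ?thesis unfolding interval_colourable_def by blast
qed

lemma ic_thickness_le_image:
  assumes fin: "finite E" and inj: "inj_on f (\<Union>E)"
  shows "ic_thickness E \<le> ic_thickness ((`) f ` E)"
proof -
  obtain p' where p': "ic_decomposition ((`) f ` E) (ic_thickness ((`) f ` E)) p'"
    using ic_decomposition_ic_thickness fin by blast
  have "ic_decomposition E (ic_thickness ((`) f ` E)) (\<lambda>e. p' (f ` e))"
    unfolding ic_decomposition_def
  proof (intro conjI ballI allI impI)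
    fix e assume "e \<in> E"
    then show "p' (f ` e) < ic_thickness ((`) f ` E)" using p' by (simp add: ic_decomposition_def)
  next
    fix i assume "i < ic_thickness ((`) f ` E)"
    then have "interval_colourable {e'\<in>(`) f ` E. p' e' = i}"
      using p' by (simp add: ic_decomposition_def)
    moreover have "{e'\<in>(`) f ` E. p' e' = i} = (`) f ` {e\<in>E. p' (f ` e) = i}" by auto
    moreover have "inj_on f (\<Union>{e\<in>E. p' (f ` e) = i})"
      by (rule inj_on_subset[OF inj]) blast
    ultimately show "interval_colourable {e\<in>E. p' (f ` e) = i}"
      by (simp add: interval_colourable_image)
  qed
  then show ?thesis by (rule ic_thickness_le)
qed

lemma simple_edges_subset: "simple_edges E \<Longrightarrow> F \<subseteq> E \<Longrightarrow> simple_edges F"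
  unfolding simple_edges_def by (auto intro: finite_subset)

lemma ic_thickness_le_theta_n:
  assumes simple: "simple_edges E" and "finite V" and sub: "\<And>e. e \<in> E \<Longrightarrow> e \<subseteq> V"
  shows "ic_thickness E \<le> theta_n (card V)"
proof -
  obtain \<phi> where \<phi>: "bij_betw \<phi> V {0..<card V}"
    using ex_bij_betw_finite_nat[OF \<open>finite V\<close>] by blast
  then have inj: "inj_on \<phi> (\<Union>E)" using sub by (meson Union_least bij_betw_def inj_on_subset)
  have "card (\<phi> ` e) = card e" if "e \<in> E" for e
    using inj_on_subset[OF inj] that by (simp add: card_image Union_upper)
  then have "simple_edges ((`) \<phi> ` E)" using simple by (simp add: simple_edges_def)
  moreover have "\<forall>e'\<in>(`) \<phi> ` E. e' \<subseteq> {0..<card V}"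
    using sub bij_betw_imp_surj_on[OF \<phi>] by blast
  ultimately have "ic_thickness ((`) \<phi> ` E)
      \<in> {ic_thickness E |E. simple_edges E \<and> (\<forall>e\<in>E. e \<subseteq> {0..<card V})}" by blast
  moreover have "finite {ic_thickness E |E. simple_edges E \<and> (\<forall>e\<in>E. e \<subseteq> {0..<card V})}"
    by (rule finite_subset[of _ "ic_thickness ` Pow (Pow {0..<card V})"]) auto
  ultimately have "ic_thickness ((`) \<phi> ` E) \<le> theta_n (card V)"
    unfolding theta_n_def by (rule Max_ge[rotated])
  moreover have "finite E" using simple by (simp add: simple_edges_def)
  ultimately show ?thesis using ic_thickness_le_image inj by (meson order_trans)
qed

definition degree :: "nat set set \<Rightarrow> nat \<Rightarrow> nat" where
  "degree E v = card {e\<in>E. v \<in> e}"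

lemma card_mult_le_two_card_edges:
  assumes simple: "simple_edges E" and "finite H" and high: "\<And>v. v \<in> H \<Longrightarrow> d \<le> degree E v"
  shows "card H * d \<le> 2 * card E"
proof -
  have fin: "finite E" and two: "\<And>e. e \<in> E \<Longrightarrow> card e = 2"
    using simple by (auto simp: simple_edges_def)
  have "card H * d = (\<Sum>v\<in>H. d)" by simp
  also have "\<dots> \<le> (\<Sum>v\<in>H. card {e\<in>E. v \<in> e})"
    by (rule sum_mono) (simp add: high[unfolded degree_def])
  also have "\<dots> = (\<Sum>e\<in>E. card {v\<in>H. v \<in> e})"
    using sum.swap_restrict[OF \<open>finite H\<close> fin, of "\<lambda>_ _. 1::nat" "\<lambda>v e. v \<in> e"] by simp
  also have "\<dots> \<le> (\<Sum>e\<in>E. card e)"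
    by (rule sum_mono, rule card_mono) (use two in \<open>auto intro: card_ge_0_finite\<close>)
  also have "\<dots> = 2 * card E" using two by simp
  finally show ?thesis .
qed

lemma greedy_colouring:
  assumes fin: "finite E" and sym: "\<And>e f. Q e f \<Longrightarrow> Q f e"
    and few_conflicts: "\<And>e. e \<in> E \<Longrightarrow> card {f\<in>E. f \<noteq> e \<and> Q e f} < k"
  shows "\<exists>p. (\<forall>e\<in>E. p e < k) \<and> (\<forall>e\<in>E. \<forall>f\<in>E. e \<noteq> f \<and> Q e f \<longrightarrow> p e \<noteq> p f)"
proof -
  have "\<exists>p. (\<forall>e\<in>F. p e < k) \<and> (\<forall>e\<in>F. \<forall>f\<in>F. e \<noteq> f \<and> Q e f \<longrightarrow> p e \<noteq> p f)"
    if "F \<subseteq> E" for F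
    using finite_subset[OF that fin] that
  proof (induction F rule: finite_subset_induct')
    case empty
    then show ?case by simp
  next
    case (insert a F)
    then obtain p where p: "\<forall>e\<in>F. p e < k" "\<forall>e\<in>F. \<forall>f\<in>F. e \<noteq> f \<and> Q e f \<longrightarrow> p e \<noteq> p f"
      by blast
    define N where "N = {f\<in>F. Q a f}"
    have "card (p ` N) \<le> card {f\<in>E. f \<noteq> a \<and> Q a f}"
      using insert fin by (intro card_image_le[THEN order_trans] card_mono) (auto simp: N_def)
    also have "\<dots> < card {0..<k}" using few_conflicts insert(2) by simp
    finally have "\<not> {0..<k} \<subseteq> p ` N"
      using insert(1) by (auto simp: N_def dest: card_mono[rotated])
    then obtain col where col: "col < k" "col \<notin> p ` N" by (auto simp: subset_iff)
    have "\<forall>e\<in>insert a F. \<forall>f\<in>insert a F. e \<noteq> f \<and> Q e f \<longrightarrow> (p(a := col)) e \<noteq> (p(a := col)) f"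
      using p(2) col(2) insert(4) sym by (auto simp: N_def)
    moreover have "\<forall>e\<in>insert a F. (p(a := col)) e < k" using p(1) col(1) by simp
    ultimately show ?case by blast
  qed
  then show ?thesis by blast
qed

lemma card_conflicts_low_degree_ends:
  assumes simple: "simple_edges E"
    and low_end: "\<And>e. e \<in> E \<Longrightarrow> l e \<in> e \<and> degree E (l e) < d" and "e \<in> E"
  shows "card {f\<in>E. f \<noteq> e \<and> (l e \<in> f \<or> l f \<in> e)} < 2 * d"
proof -
  have fin: "finite E" using simple by (simp add: simple_edges_def)
  obtain x y where xy: "e = {x, y}"
    using simple \<open>e \<in> E\<close> unfolding simple_edges_def by (meson card_2_iff)
  define w where "w = (if x = l e then y else x)"
  have w: "u = l e \<or> u = w" if "u \<in> e" for u
    using that low_end[OF \<open>e \<in> E\<close>] unfolding xy w_def by auto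
  (* A conflicting edge contains the low-degree end of e, or has its own low-degree end at w. *)
  define A where "A = {f\<in>E. l e \<in> f}"
  define B where "B = {f\<in>E. l f = w}"
  have "{f\<in>E. f \<noteq> e \<and> (l e \<in> f \<or> l f \<in> e)} \<subseteq> A \<union> B"
  proof
    fix f assume f: "f \<in> {f\<in>E. f \<noteq> e \<and> (l e \<in> f \<or> l f \<in> e)}"
    show "f \<in> A \<union> B"
    proof (cases "l e \<in> f")
      case False
      moreover have "l f \<in> f" using f low_end by blast
      ultimately have "l f \<in> e" "l f \<noteq> l e" using f by auto
      then have "l f = w" using w by blast
      then show ?thesis using f by (simp add: B_def)
    qed (use f in \<open>simp add: A_def\<close>)
  qed
  then have "card {f\<in>E. f \<noteq> e \<and> (l e \<in> f \<or> l f \<in> e)} \<le> card (A \<union> B)"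
    by (rule card_mono[rotated]) (simp add: A_def B_def fin)
  also have "\<dots> \<le> card A + card B" by (rule card_Un_le)
  finally have "card {f\<in>E. f \<noteq> e \<and> (l e \<in> f \<or> l f \<in> e)} \<le> card A + card B" .
  moreover have "card A < d" using low_end[OF \<open>e \<in> E\<close>] by (simp add: A_def degree_def)
  moreover have "card B < d"
  proof (cases "B = {}")
    case True
    then show ?thesis using \<open>card A < d\<close> by simp
  next
    case False
    then obtain f where "f \<in> E" "l f = w" by (auto simp: B_def)
    then have "degree E w < d" using low_end by metis
    moreover have "card B \<le> degree E w"
      unfolding degree_def B_def using fin low_end by (intro card_mono) auto
    ultimately show ?thesis by linarith
  qed
  ultimately show ?thesis by linarith
qed

lemma ic_thickness_le_if_low_degree_ends:
  assumes simple: "simple_edges E" and low: "\<And>e. e \<in> E \<Longrightarrow> \<exists>v\<in>e. degree E v < d"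
  shows "ic_thickness E \<le> 2 * d"
proof -
  have fin: "finite E" and two: "\<And>e. e \<in> E \<Longrightarrow> card e = 2"
    using simple by (auto simp: simple_edges_def)
  obtain l where l: "\<And>e. e \<in> E \<Longrightarrow> l e \<in> e \<and> degree E (l e) < d"
    using low by metis
  obtain p where p: "\<forall>e\<in>E. p e < 2 * d"
    and proper: "\<forall>e\<in>E. \<forall>f\<in>E. e \<noteq> f \<and> (l e \<in> f \<or> l f \<in> e) \<longrightarrow> p e \<noteq> p f"
    using greedy_colouring[OF fin, of "\<lambda>e f. l e \<in> f \<or> l f \<in> e"]
      card_conflicts_low_degree_ends[OF simple l] by blast
  have "interval_colourable {e\<in>E. p e = i}" for i
    using fin two l proper by (intro interval_colourable_pendant_ends[where l = l]) auto
  then have "ic_decomposition E (2 * d) p" using p by (simp add: ic_decomposition_def)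
  then show ?thesis by (rule ic_thickness_le)
qed

lemma degree_mono: "finite E \<Longrightarrow> F \<subseteq> E \<Longrightarrow> degree F v \<le> degree E v"
  unfolding degree_def by (rule card_mono) auto

lemma ic_thickness_le_theta_n_add:
  assumes simple: "simple_edges E"
  shows "\<exists>h. h * d \<le> 2 * card E \<and> ic_thickness E \<le> theta_n h + 2 * d"
proof -
  have fin: "finite E" using simple by (simp add: simple_edges_def)
  define H where "H = {v \<in> \<Union>E. d \<le> degree E v}"
  define E_low where "E_low = {e\<in>E. \<exists>v\<in>e. degree E v < d}"
  define E_high where "E_high = E - E_low"
  have "finite (\<Union>E)"
    using simple unfolding simple_edges_def by (intro finite_Union) (auto intro: card_ge_0_finite)
  then have "finite H" unfolding H_def by (rule finite_subset[rotated]) blast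
  then have card_H: "card H * d \<le> 2 * card E"
    by (rule card_mult_le_two_card_edges[OF simple]) (simp add: H_def)
  have high: "ic_thickness E_high \<le> theta_n (card H)"
    using simple \<open>finite H\<close> by (intro ic_thickness_le_theta_n)
      (auto simp: E_high_def E_low_def H_def not_less intro: simple_edges_subset)
  have low: "ic_thickness E_low \<le> 2 * d"
  proof (rule ic_thickness_le_if_low_degree_ends)
    show "simple_edges E_low" using simple by (rule simple_edges_subset) (simp add: E_low_def)
    fix e assume "e \<in> E_low"
    then obtain v where "v \<in> e" "degree E v < d" by (auto simp: E_low_def)
    moreover have "degree E_low v \<le> degree E v"
      by (rule degree_mono[OF fin]) (simp add: E_low_def)
    ultimately show "\<exists>v\<in>e. degree E_low v < d" by (meson order.strict_trans1)
  qed
  have "E = E_high \<union> E_low" "E_high \<inter> E_low = {}"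
    by (auto simp: E_high_def E_low_def)
  then have "ic_thickness E \<le> ic_thickness E_high + ic_thickness E_low"
    using ic_thickness_Un_le[of E_high E_low] fin by simp
  then show ?thesis using card_H high low by (intro exI[of _ "card H"]) simp
qed

lemma theta_m_attained: "\<exists>E. simple_edges E \<and> card E = m \<and> theta_m m = ic_thickness E"
proof -
  define S where "S = {ic_thickness E | E. simple_edges E \<and> card E = m}"
  have "S \<subseteq> {..m}" unfolding S_def using ic_thickness_le_card by (auto simp: simple_edges_def)
  then have "finite S" by (rule finite_subset) simp
  define matching where "matching = (\<lambda>i. {2*i, 2*i+1}) ` {..<m}"
  have "inj_on (\<lambda>i::nat. {2*i, 2*i+1}) {..<m}"
    by (auto simp: inj_on_def doubleton_eq_iff)
  then have "card matching = m" by (simp add: matching_def card_image)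
  moreover have "simple_edges matching" unfolding simple_edges_def matching_def by auto
  ultimately have "S \<noteq> {}" unfolding S_def by blast
  with \<open>finite S\<close> have "Max S \<in> S" by (rule Max_in)
  then show ?thesis unfolding S_def theta_m_def by auto
qed

lemma theta_m_le_theta_n_add: "\<exists>h. h * d \<le> 2 * m \<and> theta_m m \<le> theta_n h + 2 * d"
  using theta_m_attained[of m] ic_thickness_le_theta_n_add by metis

lemma bigo_imp_affine_bound:
  fixes f g :: "nat \<Rightarrow> real"
  assumes "f \<in> O(g)" and g_nonneg: "\<And>n. 0 \<le> g n"
  shows "\<exists>c K. 0 \<le> c \<and> (\<forall>n. f n \<le> c * g n + K)"
proof -
  obtain c where "c > 0" and "eventually (\<lambda>n. norm (f n) \<le> c * norm (g n)) at_top"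
    using assms(1) by (rule landau_o.bigE)
  then obtain N where "\<forall>n\<ge>N. \<bar>f n\<bar> \<le> c * g n"
    using g_nonneg by (auto simp: eventually_at_top_linorder)
  then have N: "\<And>n. N \<le> n \<Longrightarrow> f n \<le> c * g n" by (meson abs_le_D1)
  define K where "K = (\<Sum>n<N. \<bar>f n\<bar>)"
  have "f n \<le> c * g n + K" for n
  proof (cases "n < N")
    case True
    then have "\<bar>f n\<bar> \<le> K" unfolding K_def by (intro member_le_sum) auto
    then have "f n \<le> K" by linarith
    then show ?thesis using \<open>c > 0\<close> g_nonneg[of n] by (simp add: add_increasing)
  next
    case False
    then show ?thesis using N[of n] by (simp add: K_def add_increasing2 sum_nonneg)
  qed
  then show ?thesis using \<open>c > 0\<close> by (intro exI[of _ c] exI[of _ K]) simp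
qed

lemma powr_le_of_mult_le:
  fixes \<alpha> h d m :: real
  assumes "0 < \<alpha>" "\<alpha> \<le> 1" "1 \<le> m" "0 \<le> h"
    and d_ge: "m powr (\<alpha> / (1 + \<alpha>)) \<le> d" and hd: "h * d \<le> 2 * m"
  shows "h powr \<alpha> \<le> 2 * m powr (\<alpha> / (1 + \<alpha>))"
proof -
  define \<beta> where "\<beta> = \<alpha> / (1 + \<alpha>)"
  have mb: "0 < m powr \<beta>" using \<open>1 \<le> m\<close> by simp
  have "h * m powr \<beta> \<le> h * d"
    using d_ge \<open>0 \<le> h\<close> unfolding \<beta>_def by (rule mult_left_mono)
  then have "h \<le> 2 * m / m powr \<beta>" using hd mb by (simp add: pos_le_divide_eq)
  also have "\<dots> = 2 * m powr (1 - \<beta>)" using \<open>1 \<le> m\<close> by (simp add: powr_diff)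
  finally have "h powr \<alpha> \<le> (2 * m powr (1 - \<beta>)) powr \<alpha>"
    using \<open>0 < \<alpha>\<close> \<open>0 \<le> h\<close> by (intro powr_mono2) auto
  also have "\<dots> = 2 powr \<alpha> * m powr ((1 - \<beta>) * \<alpha>)"
    using \<open>1 \<le> m\<close> by (simp add: powr_mult powr_powr)
  also have "(1 - \<beta>) * \<alpha> = \<beta>" using \<open>0 < \<alpha>\<close> by (simp add: \<beta>_def field_simps)
  also have "2 powr \<alpha> \<le> (2::real) powr 1" using \<open>\<alpha> \<le> 1\<close> by (intro powr_mono) auto
  then have "2 powr \<alpha> * m powr \<beta> \<le> 2 * m powr \<beta>" using mb by simp
  finally show ?thesis unfolding \<beta>_def .
qed

lemma theta_m_le_powr:
  fixes \<alpha> c K :: real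
  assumes "0 < \<alpha>" "\<alpha> \<le> 1" "0 \<le> c"
    and theta_n_le: "\<And>n. real (theta_n n) \<le> c * real n powr \<alpha> + K" and "1 \<le> m"
  shows "real (theta_m m) \<le> (2 * c + 4 + \<bar>K\<bar>) * real m powr (\<alpha> / (1 + \<alpha>))"
proof -
  define \<beta> where "\<beta> = \<alpha> / (1 + \<alpha>)"
  have m_pow: "1 \<le> real m powr \<beta>" using assms(1,5) by (simp add: \<beta>_def ge_one_powr_ge_zero)
  define d where "d = nat \<lceil>real m powr \<beta>\<rceil>"
  have d: "real m powr \<beta> \<le> real d" "real d \<le> real m powr \<beta> + 1"
    using m_pow unfolding d_def by linarith+
  obtain h where hd: "h * d \<le> 2 * m" and theta_m_le: "theta_m m \<le> theta_n h + 2 * d"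
    using theta_m_le_theta_n_add by blast
  have "real (h * d) \<le> real (2 * m)" using hd by (rule of_nat_mono)
  then have "real h powr \<alpha> \<le> 2 * real m powr \<beta>"
    using assms(1,2,5) d(1) unfolding \<beta>_def by (intro powr_le_of_mult_le) simp_all
  then have "c * real h powr \<alpha> \<le> 2 * c * real m powr \<beta>"
    using \<open>0 \<le> c\<close> mult_left_mono by fastforce
  moreover have "\<bar>K\<bar> \<le> \<bar>K\<bar> * real m powr \<beta>"
    using mult_left_mono[OF m_pow abs_ge_zero] by simp
  moreover have "real (theta_m m) \<le> c * real h powr \<alpha> + K + 2 * real d"
    using theta_m_le theta_n_le[of h] by linarith
  ultimately show ?thesis using d(2) m_pow unfolding \<beta>_def by (simp add: distrib_right)
qed

theorem lemma7:
  fixes \<alpha> :: real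
  assumes "0 < \<alpha>" and "\<alpha> \<le> 1"
    and "(\<lambda>n. real (theta_n n)) \<in> O(\<lambda>n. real n powr \<alpha>)"
  shows "(\<lambda>m. real (theta_m m)) \<in> O(\<lambda>m. real m powr (\<alpha> / (1 + \<alpha>)))"
proof -
  obtain c K where c: "0 \<le> c" and bound: "\<And>n. real (theta_n n) \<le> c * real n powr \<alpha> + K"
    using bigo_imp_affine_bound[OF assms(3)] by auto
  have "real (theta_m m) \<le> (2 * c + 4 + \<bar>K\<bar>) * real m powr (\<alpha> / (1 + \<alpha>))" if "1 \<le> m" for m
    using theta_m_le_powr[OF assms(1,2) c bound that] .
  then have "eventually (\<lambda>m. norm (real (theta_m m))
      \<le> (2 * c + 4 + \<bar>K\<bar>) * norm (real m powr (\<alpha> / (1 + \<alpha>)))) at_top"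
    unfolding eventually_at_top_linorder by auto
  then show ?thesis by (rule bigoI)
qed

end
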